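(* Let $\mathcal{D}$ be a finite set of $N\ge 2$ distinct real numbers, all in $[a,b]$, and let $0<\delta<1$. Suppose $\mathrm{LB}$ and $\mathrm{RB}$ are range-based lower and upper confidence bounders with the following validity property: for every finite set $\mathcal{D}'$ of reals contained in an interval $[a',b']$, every $k\ge 1$ with $k\le|\mathcal{D}'|$, and every $\delta'\in(0,1)$, if $T$ is a uniform without-replacement sample of size $k$ from $\mathcal{D}'$, then $\Pr[\mathrm{LB}(T,a',b',\delta') > \mathrm{AVG}(\mathcal{D}')] < \delta'$ and $\Pr[\mathrm{RB}(T,a',b',\delta') < \mathrm{AVG}(\mathcal{D}')] < \delta'$. Let $2 \le m \le N$ and let $S$ be a uniform without-replacement sample of size $m$ from $\mathcal{D}$. Define $$g_\ell = \mathrm{LB}\big(S\setminus\{\max S\},\, a,\, \max S,\, \delta/2\big),\qquad g_r = \mathrm{RB}\big(S\setminus\{\min S\},\, \min S,\, b,\, \delta/2\big).$$ Then $\Pr\big[\mathrm{AVG}(\mathcal{D}) \notin [g_\ell, g_r]\big] < \delta$. In particular $g_\ell$ does not depend on $b$ and $g_r$ does not depend on $a$.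
   Context: $\mathrm{AVG}(\mathcal{D})$ is the arithmetic mean of the elements of $\mathcal{D}$. For $x\in\mathbb{R}$, write $\mathcal{D}_{<x}=\mathcal{D}\cap(-\infty,x)$ and $\mathcal{D}_{>x}=\mathcal{D}\cap(x,\infty)$. A uniform without-replacement sample of size $k$ from a finite set is a uniformly random $k$-element subset (equivalently the first $k$ entries of a uniformly random ordering). *)

theory Defs
  imports "HOL-Probability.Probability"
begin

definition AVG :: "real set \<Rightarrow> real" where
  "AVG D = (\<Sum>x\<in>D. x) / real (card D)"

definition sample_wor :: "'a set \<Rightarrow> nat \<Rightarrow> 'a set pmf" where
  "sample_wor D k = pmf_of_set {T. T \<subseteq> D \<and> card T = k}"

definition valid_LB :: "(real set \<Rightarrow> real \<Rightarrow> real \<Rightarrow> real \<Rightarrow> real) \<Rightarrow> bool" where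
  "valid_LB LB \<longleftrightarrow> (\<forall>D' a' b' k \<delta>'. finite D' \<and> D' \<subseteq> {a'..b'} \<and> 1 \<le> k \<and> k \<le> card D'
      \<and> 0 < \<delta>' \<and> \<delta>' < 1 \<longrightarrow>
      measure_pmf.prob (sample_wor D' k) {T. LB T a' b' \<delta>' > AVG D'} < \<delta>')"

definition valid_RB :: "(real set \<Rightarrow> real \<Rightarrow> real \<Rightarrow> real \<Rightarrow> real) \<Rightarrow> bool" where
  "valid_RB RB \<longleftrightarrow> (\<forall>D' a' b' k \<delta>'. finite D' \<and> D' \<subseteq> {a'..b'} \<and> 1 \<le> k \<and> k \<le> card D'
      \<and> 0 < \<delta>' \<and> \<delta>' < 1 \<longrightarrow>
      measure_pmf.prob (sample_wor D' k) {T. RB T a' b' \<delta>' < AVG D'} < \<delta>')"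

end

theory Submission
  imports Defs
begin

text \<open>Conditioned on \<open>Max S = x\<close>, the rest \<open>S - {x}\<close> is a uniform sample of size \<open>m - 1\<close>
  from \<open>{y \<in> D. y < x}\<close>, a set contained in \<open>{a..x}\<close> whose mean is at most \<open>AVG D\<close>.
  So the lower bound can exceed \<open>AVG D\<close> only if the bounder overshoots the mean of that
  smaller set, which has conditional probability below \<open>\<delta>/2\<close>; summing over \<open>x\<close> gives the
  same bound unconditionally. The upper bound is the mirror image under \<open>x \<mapsto> -x\<close>, and a
  union bound finishes the proof.\<close>

lemma measure_sample_wor:
  assumes "finite D" and "k \<le> card D"
  shows "measure_pmf.prob (sample_wor D k) E =
    real (card {T. T \<subseteq> D \<and> card T = k \<and> T \<in> E}) / real (card {T. T \<subseteq> D \<and> card T = k})"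
proof -
  have "{T. T \<subseteq> D \<and> card T = k} \<noteq> {}"
    using obtain_subset_with_card_n[OF assms(2)] by blast
  moreover have "finite {T. T \<subseteq> D \<and> card T = k}"
    using assms(1) by simp
  ultimately show ?thesis
    unfolding sample_wor_def by (simp add: measure_pmf_of_set Int_def)
qed

lemma set_pmf_sample_wor:
  assumes "finite D" and "k \<le> card D"
  shows "set_pmf (sample_wor D k) = {T. T \<subseteq> D \<and> card T = k}"
  using obtain_subset_with_card_n[OF assms(2)] assms(1)
  unfolding sample_wor_def by (subst set_pmf_of_set) auto

lemma sample_wor_image:
  assumes "inj_on f D" and "finite D" and "k \<le> card D"
  shows "sample_wor (f ` D) k = map_pmf (image f) (sample_wor D k)"
proof -
  have "image f ` {T. T \<subseteq> D \<and> card T = k} = {T. T \<subseteq> f ` D \<and> card T = k}"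
    using assms(1) by (auto simp: subset_image_iff card_image inj_on_subset)
  moreover have "inj_on (image f) {T. T \<subseteq> D \<and> card T = k}"
    using inj_on_image_Pow[OF assms(1)] by (rule inj_on_subset) auto
  moreover have "{T. T \<subseteq> D \<and> card T = k} \<noteq> {}"
    using obtain_subset_with_card_n[OF assms(3)] by blast
  ultimately show ?thesis
    unfolding sample_wor_def using assms(2) by (simp add: map_pmf_of_set_inj)
qed

lemma AVG_uminus: "AVG (uminus ` D) = - AVG D"
  by (simp add: AVG_def card_image sum.reindex sum_negf)

lemma AVG_lower_part_le:
  fixes D :: "real set"
  assumes "finite D" and "\<exists>y\<in>D. y < x"
  shows "AVG {y\<in>D. y < x} \<le> AVG D"
proof -
  define A where "A = {y\<in>D. y < x}"
  define B where "B = {y\<in>D. x \<le> y}"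
  have "finite A" "finite B" "A \<inter> B = {}" "D = A \<union> B"
    using assms(1) by (auto simp: A_def B_def)
  then have sum_D: "\<Sum>D = \<Sum>A + \<Sum>B" and card_D: "card D = card A + card B"
    by (simp_all add: sum.union_disjoint card_Un_disjoint)
  have "card A > 0"
    using assms \<open>finite A\<close> by (auto simp: A_def card_gt_0_iff)
  have "\<Sum>A \<le> card A * x"
    using sum_mono[of A "\<lambda>y. y" "\<lambda>_. x"] by (auto simp: A_def)
  then have "\<Sum>A * card B \<le> card A * x * card B"
    by (simp add: mult_right_mono)
  also have "\<dots> \<le> card A * \<Sum>B"
    using sum_mono[of B "\<lambda>_. x" "\<lambda>y. y"] mult_left_mono[of "card B * x" "\<Sum>B" "card A"]
    by (auto simp: B_def mult_ac)
  finally have "\<Sum>A / card A \<le> (\<Sum>A + \<Sum>B) / (card A + card B)"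
    using \<open>card A > 0\<close> by (simp add: field_simps)
  then show ?thesis
    unfolding AVG_def A_def[symmetric] by (simp add: sum_D card_D)
qed

lemma card_subsets_by_Max:
  fixes D :: "'a::linorder set"
  assumes "finite D" and "1 \<le> m"
  shows "card {S. S \<subseteq> D \<and> card S = m \<and> Q (Max S) (S - {Max S})} =
    (\<Sum>x\<in>D. card {T. T \<subseteq> {y\<in>D. y < x} \<and> card T = m - 1 \<and> Q x T})"
proof -
  let ?A = "{S. S \<subseteq> D \<and> card S = m \<and> Q (Max S) (S - {Max S})}"
  let ?F = "\<lambda>x. {T. T \<subseteq> {y\<in>D. y < x} \<and> card T = m - 1 \<and> Q x T}"
  have Max_split: "Max S \<in> S" "S - {Max S} \<subseteq> {y\<in>D. y < Max S}" "card (S - {Max S}) = m - 1"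
    if "S \<subseteq> D" "card S = m" for S
  proof -
    have "finite S" "S \<noteq> {}"
      using that assms finite_subset by auto
    then show "Max S \<in> S" "S - {Max S} \<subseteq> {y\<in>D. y < Max S}" "card (S - {Max S}) = m - 1"
      using that by (auto simp: less_le)
  qed
  have Max_insert: "Max (insert x T) = x" and finite_below: "finite T" and notin_below: "x \<notin> T"
    if "T \<subseteq> {y\<in>D. y < x}" for x T
  proof -
    show "finite T"
      using that assms(1) by (auto intro: finite_subset)
    then show "Max (insert x T) = x"
      using that by (intro Max_eqI) auto
    show "x \<notin> T"
      using that by auto
  qed
  have "bij_betw (\<lambda>S. (Max S, S - {Max S})) ?A (SIGMA x:D. ?F x)"
  proof (rule bij_betw_byWitness[where f' = "\<lambda>(x, T). insert x T"])
    show "\<forall>S\<in>?A. (\<lambda>(x, T). insert x T) (Max S, S - {Max S}) = S"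
      using Max_split(1) by auto
    show "(\<lambda>S. (Max S, S - {Max S})) ` ?A \<subseteq> (SIGMA x:D. ?F x)"
      using Max_split by blast
    show "\<forall>p\<in>SIGMA x:D. ?F x. (\<lambda>S. (Max S, S - {Max S})) ((\<lambda>(x, T). insert x T) p) = p"
      using Max_insert notin_below by auto
    show "(\<lambda>(x, T). insert x T) ` (SIGMA x:D. ?F x) \<subseteq> ?A"
      using Max_insert finite_below notin_below assms(2)
      by auto
  qed
  then have "card ?A = card (SIGMA x:D. ?F x)"
    by (rule bij_betw_same_card)
  also have "\<dots> = (\<Sum>x\<in>D. card (?F x))"
    using assms(1) by (intro card_SigmaI) auto
  finally show ?thesis .
qed

lemma card_subsets_of_card_pos:
  assumes "finite D" and "k \<le> card D"
  shows "card {T. T \<subseteq> D \<and> card T = k} > 0"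
  using obtain_subset_with_card_n[OF assms(2)] assms(1) by (auto simp: card_gt_0_iff)

lemma valid_LB_card_subsets_less:
  assumes "valid_LB LB" and "finite A" and "A \<subseteq> {a..b}"
    and "1 \<le> k" and "k \<le> card A" and "0 < c" and "c < 1" and "AVG A \<le> \<mu>"
  shows "real (card {T. T \<subseteq> A \<and> card T = k \<and> \<mu> < LB T a b c})
    < c * card {T. T \<subseteq> A \<and> card T = k}"
proof -
  have "measure_pmf.prob (sample_wor A k) {T. AVG A < LB T a b c} < c"
    using assms unfolding valid_LB_def by blast
  then have "real (card {T. T \<subseteq> A \<and> card T = k \<and> AVG A < LB T a b c})
      < c * card {T. T \<subseteq> A \<and> card T = k}"
    using card_subsets_of_card_pos[OF assms(2,5)]
    by (simp add: measure_sample_wor[OF assms(2,5)] divide_less_eq)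
  moreover have "card {T. T \<subseteq> A \<and> card T = k \<and> \<mu> < LB T a b c}
      \<le> card {T. T \<subseteq> A \<and> card T = k \<and> AVG A < LB T a b c}"
    using assms(2,8) by (intro card_mono) auto
  ultimately show ?thesis
    by linarith
qed

lemma valid_LB_without_Max:
  fixes D :: "real set"
  assumes "valid_LB LB" and "finite D" and "D \<subseteq> {a..}"
    and "0 < c" and "c < 1" and "2 \<le> m" and "m \<le> card D"
  shows "measure_pmf.prob (sample_wor D m) {S. AVG D < LB (S - {Max S}) a (Max S) c} < c"
proof -
  define V where "V x = {T. T \<subseteq> {y\<in>D. y < x} \<and> card T = m - 1}" for x
  define W where "W x = {T. T \<subseteq> {y\<in>D. y < x} \<and> card T = m - 1 \<and> AVG D < LB T a x c}" for x
  have fibre_less: "real (card (W x)) < c * card (V x)" if nonempty: "V x \<noteq> {}" for x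
  proof -
    obtain T where T: "T \<subseteq> {y\<in>D. y < x}" "card T = m - 1"
      using nonempty unfolding V_def by blast
    have "m - 1 \<le> card {y\<in>D. y < x}"
      using T assms(2) card_mono[of "{y\<in>D. y < x}" T] by simp
    moreover have "T \<noteq> {}"
      using T(2) assms(6) by auto
    then have "\<exists>y\<in>D. y < x"
      using T(1) by blast
    moreover have "{y\<in>D. y < x} \<subseteq> {a..x}"
      using assms(3) by auto
    ultimately show ?thesis
      unfolding V_def W_def using assms(1,2,4-6) AVG_lower_part_le[OF assms(2)]
      by (intro valid_LB_card_subsets_less) auto
  qed
  have fibre_le: "real (card (W x)) \<le> c * card (V x)" for x
  proof (cases "V x = {}")
    case True
    moreover have "W x \<subseteq> V x"
      unfolding V_def W_def by blast
    ultimately show ?thesis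
      by simp
  next
    case False
    then show ?thesis
      using fibre_less less_imp_le by blast
  qed
  have count_all: "card {S. S \<subseteq> D \<and> card S = m} = (\<Sum>x\<in>D. card (V x))"
    unfolding V_def using card_subsets_by_Max[OF assms(2), of m "\<lambda>_ _. True"] assms(6) by simp
  have count_event: "card {S. S \<subseteq> D \<and> card S = m \<and> AVG D < LB (S - {Max S}) a (Max S) c}
      = (\<Sum>x\<in>D. card (W x))"
    unfolding W_def using card_subsets_by_Max[OF assms(2), of m "\<lambda>x T. AVG D < LB T a x c"] assms(6)
    by simp
  have all_pos: "card {S. S \<subseteq> D \<and> card S = m} > 0"
    using assms(2,7) by (rule card_subsets_of_card_pos)
  then obtain x where "x \<in> D" "V x \<noteq> {}"
    unfolding count_all by (metis card.empty less_irrefl sum.neutral)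
  then have "(\<Sum>x\<in>D. real (card (W x))) < (\<Sum>x\<in>D. c * card (V x))"
    using fibre_le fibre_less assms(2) by (intro sum_strict_mono_ex1) auto
  then have "real (card {S. S \<subseteq> D \<and> card S = m \<and> AVG D < LB (S - {Max S}) a (Max S) c})
      < c * card {S. S \<subseteq> D \<and> card S = m}"
    by (simp add: count_all count_event sum_distrib_left)
  then show ?thesis
    using all_pos by (simp add: measure_sample_wor[OF assms(2,7)] divide_less_eq)
qed

lemma valid_LB_reflect_RB:
  assumes "valid_RB RB"
  shows "valid_LB (\<lambda>T a b c. - RB (uminus ` T) (- b) (- a) c)"
  unfolding valid_LB_def
proof (intro allI impI, elim conjE)
  fix D :: "real set" and a b c :: real and k :: nat
  assume D: "finite D" "D \<subseteq> {a..b}" and k: "1 \<le> k" "k \<le> card D" and c: "0 < c" "c < 1"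
  have "measure_pmf.prob (sample_wor (uminus ` D) k) {T. RB T (- b) (- a) c < AVG (uminus ` D)} < c"
  proof -
    have "uminus ` D \<subseteq> {- b..- a}"
      using D(2) by auto
    then show ?thesis
      using assms D k c unfolding valid_RB_def by (simp add: card_image)
  qed
  then show "measure_pmf.prob (sample_wor D k) {T. AVG D < - RB (uminus ` T) (- b) (- a) c} < c"
    using D k by (simp add: sample_wor_image AVG_uminus vimage_def less_minus_iff)
qed

lemma valid_RB_without_Min:
  fixes D :: "real set"
  assumes "valid_RB RB" and "finite D" and "D \<subseteq> {..b}"
    and "0 < c" and "c < 1" and "2 \<le> m" and "m \<le> card D"
  shows "measure_pmf.prob (sample_wor D m) {S. RB (S - {Min S}) (Min S) b c < AVG D} < c"
proof -
  let ?E = "{S. AVG (uminus ` D) < - RB (uminus ` (S - {Max S})) (- Max S) (- (- b)) c}"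
  have "measure_pmf.prob (sample_wor (uminus ` D) m) ?E < c"
    using assms by (intro valid_LB_without_Max[OF valid_LB_reflect_RB]) (auto simp: card_image)
  moreover have "measure_pmf.prob (sample_wor (uminus ` D) m) ?E
      = measure_pmf.prob (sample_wor D m) {S. RB (S - {Min S}) (Min S) b c < AVG D}"
  proof -
    have "uminus ` (uminus ` S - {Max (uminus ` S)}) = S - {Min S}"
      and "Max (uminus ` S) = - Min S"
      if "S \<in> set_pmf (sample_wor D m)" for S
    proof -
      have "finite S" "S \<noteq> {}"
        using that assms(2,6,7) by (auto simp: set_pmf_sample_wor intro: finite_subset)
      then show "Max (uminus ` S) = - Min S"
        by simp
      then show "uminus ` (uminus ` S - {Max (uminus ` S)}) = S - {Min S}"
        by (simp add: image_set_diff image_image)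
    qed
    then show ?thesis
      using assms(2,7)
      by (auto simp: sample_wor_image AVG_uminus intro!: measure_pmf.finite_measure_eq_AE AE_pmfI)
  qed
  ultimately show ?thesis
    by simp
qed

theorem mainTheorem3:
  fixes D :: "real set" and a b \<delta> :: real and m :: nat
    and LB RB :: "real set \<Rightarrow> real \<Rightarrow> real \<Rightarrow> real \<Rightarrow> real"
  assumes "finite D" and "card D \<ge> 2" and "D \<subseteq> {a..b}"
    and "0 < \<delta>" and "\<delta> < 1"
    and "valid_LB LB" and "valid_RB RB"
    and "2 \<le> m" and "m \<le> card D"
  shows "measure_pmf.prob (sample_wor D m)
           {S. AVG D \<notin> {LB (S - {Max S}) a (Max S) (\<delta>/2) .. RB (S - {Min S}) (Min S) b (\<delta>/2)}}
         < \<delta>"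
proof -
  let ?P = "measure_pmf.prob (sample_wor D m)"
  let ?L = "{S. AVG D < LB (S - {Max S}) a (Max S) (\<delta>/2)}"
  let ?R = "{S. RB (S - {Min S}) (Min S) b (\<delta>/2) < AVG D}"
  have "?P {S. AVG D \<notin> {LB (S - {Max S}) a (Max S) (\<delta>/2) .. RB (S - {Min S}) (Min S) b (\<delta>/2)}}
      \<le> ?P (?L \<union> ?R)"
    by (intro measure_pmf.finite_measure_mono) auto
  also have "\<dots> \<le> ?P ?L + ?P ?R"
    by (rule measure_Un_le) simp_all
  also have "\<dots> < \<delta>/2 + \<delta>/2"
    using valid_LB_without_Max[OF assms(6,1), of a "\<delta>/2" m]
      valid_RB_without_Min[OF assms(7,1), of b "\<delta>/2" m] assms
    by fastforce
  finally show ?thesis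
    by simp
qed

end
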